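(* Let $g\in[\mathbb{F}_2,\mathbb{F}_2]$ and let $\alpha=\alpha_g=P_\alpha(x,y)X+Q_\alpha(x,y)Y$ be the corresponding cycle defined below. Let $k,l\ge0$ be integers and suppose $P_\alpha(x,y)=(x-1)^k(y-1)^l h(x,y)$ for a Laurent polynomial $h\in\mathbb{Z}[x^{\pm1},y^{\pm1}]$. If $g$ is a product of two squares in $\mathbb{F}_2$ (i.e. $g=a^2b^2$ with $a,b\in\mathbb{F}_2$), then $h(1,1)$ is even.
   Context: $\mathbb{F}_2$ is the free group on $x,y$. Let $\tilde K$ be the graph with vertex set $\mathbb{Z}^2$ and oriented edges $x^iy^jX$ from $(i,j)$ to $(i+1,j)$ and $x^iy^jY$ from $(i,j)$ to $(i,j+1)$ (the universal abelian cover of the wedge of two circles). A $1$-chain is written $\alpha=P_\alpha(x,y)X+Q_\alpha(x,y)Y$ with $P_\alpha,Q_\alpha$ integer Laurent polynomials (coefficient of $x^iy^j$ in $P_\alpha$ = coefficient of edge $x^iy^jX$, similarly for $Q_\alpha$). For $g\in[\mathbb{F}_2,\mathbb{F}_2]$ written as a word in $x^{\pm1},y^{\pm1}$, the cycle $\alpha_g$ is the $1$-cycle traced by the lattice path from $(0,0)$ in which $x,x^{-1},y,y^{-1}$ move by $(1,0),(-1,0),(0,1),(0,-1)$ along the corresponding edges, each edge counted with sign $+1$ if traversed in its orientation and $-1$ otherwise; it depends only on $g$. *)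

theory Defs
  imports Main "HOL-Library.Poly_Mapping" "HOL-Library.Product_Plus"
begin

(* Letters of the free group F_2 on x,y: x, x^-1, y, y^-1 *)
datatype letter = Lx | Lxi | Ly | Lyi

type_synonym word = "letter list"

fun inv_letter :: "letter \<Rightarrow> letter" where
  "inv_letter Lx = Lxi" | "inv_letter Lxi = Lx"
| "inv_letter Ly = Lyi" | "inv_letter Lyi = Ly"

definition inv_word :: "word \<Rightarrow> word" where
  "inv_word w = rev (map inv_letter w)"

definition cancel_step :: "word \<Rightarrow> word \<Rightarrow> bool" where
  "cancel_step u v \<longleftrightarrow> (\<exists>p q c. u = p @ [c, inv_letter c] @ q \<and> v = p @ q)"

definition free_eq :: "word \<Rightarrow> word \<Rightarrow> bool" where
  "free_eq = equivclp cancel_step"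

inductive in_commutator :: "word \<Rightarrow> bool" where
  comm_nil: "in_commutator []"
| comm_gen: "in_commutator (a @ b @ inv_word a @ inv_word b)"
| comm_inv: "in_commutator u \<Longrightarrow> in_commutator (inv_word u)"
| comm_mult: "in_commutator u \<Longrightarrow> in_commutator v \<Longrightarrow> in_commutator (u @ v)"
| comm_eq: "in_commutator u \<Longrightarrow> free_eq u v \<Longrightarrow> in_commutator v"

(* Integer Laurent polynomials in x,y: finitely supported Z^2 -> Z,
   monomial x^i y^j <-> exponent (i,j); multiplication is convolution. *)
type_synonym laurent = "(int \<times> int) \<Rightarrow>\<^sub>0 int"

definition lx :: laurent where "lx = Poly_Mapping.single (1, 0) 1"
definition ly :: laurent where "ly = Poly_Mapping.single (0, 1) 1"

definition eval_at_11 :: "laurent \<Rightarrow> int" where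
  "eval_at_11 h = (\<Sum>m\<in>Poly_Mapping.keys h. Poly_Mapping.lookup h m)"

(* X-coefficient of the 1-chain traced by the lattice path of a word,
   starting at the given point: x at (i,j) traverses edge x^i y^j X positively,
   x^-1 at (i,j) traverses edge x^(i-1) y^j X negatively. *)
fun pathP :: "int \<times> int \<Rightarrow> word \<Rightarrow> laurent" where
  "pathP p [] = 0"
| "pathP (i, j) (Lx # w) = Poly_Mapping.single (i, j) 1 + pathP (i + 1, j) w"
| "pathP (i, j) (Lxi # w) = - Poly_Mapping.single (i - 1, j) 1 + pathP (i - 1, j) w"
| "pathP (i, j) (Ly # w) = pathP (i, j + 1) w"
| "pathP (i, j) (Lyi # w) = pathP (i, j - 1) w"

fun pathQ :: "int \<times> int \<Rightarrow> word \<Rightarrow> laurent" where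
  "pathQ p [] = 0"
| "pathQ (i, j) (Ly # w) = Poly_Mapping.single (i, j) 1 + pathQ (i, j + 1) w"
| "pathQ (i, j) (Lyi # w) = - Poly_Mapping.single (i, j - 1) 1 + pathQ (i, j - 1) w"
| "pathQ (i, j) (Lx # w) = pathQ (i + 1, j) w"
| "pathQ (i, j) (Lxi # w) = pathQ (i - 1, j) w"

definition P_alpha :: "word \<Rightarrow> laurent" where "P_alpha w = pathP (0, 0) w"
definition Q_alpha :: "word \<Rightarrow> laurent" where "Q_alpha w = pathQ (0, 0) w"

end

theory Submission
  imports Defs "HOL-Computational_Algebra.Formal_Power_Series"
begin

(* If g = a a b b in F_2 and the path of a ends at e, then the path of b ends at -e because g
   lies in the commutator subgroup, so the X-part of alpha_g is (1 + t)(A + t B) with the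
   monomial t = x^e1 y^e2 and A, B the X-parts of the paths of a and b.
   Expand Laurent polynomials at (1,1): the Taylor coefficients form a ring homomorphism
   (Leibniz rule), 1 + t has constant term 2, and (x-1)^k (y-1)^l h has no coefficients below
   (k,l) and coefficient h(1,1) at (k,l). Since 1 + t is invertible in the power series ring,
   the factor A + t B also vanishes below (k,l), so h(1,1) is twice its (k,l)-coefficient. *)

fun displacement :: "word \<Rightarrow> int \<times> int" where
  "displacement [] = (0, 0)"
| "displacement (Lx # w) = (1, 0) + displacement w"
| "displacement (Lxi # w) = (-1, 0) + displacement w"
| "displacement (Ly # w) = (0, 1) + displacement w"
| "displacement (Lyi # w) = (0, -1) + displacement w"

lemma displacement_append: "displacement (u @ v) = displacement u + displacement v"
proof (induction u)
  case (Cons c u) then show ?case by (cases c) (simp_all add: add.assoc)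
qed (simp add: zero_prod_def)

lemma displacement_inv_word: "displacement (inv_word u) = - displacement u"
proof (induction u)
  case (Cons c u)
  have "displacement (inv_word (c # u)) = displacement (inv_word u) + displacement [inv_letter c]"
    by (simp add: inv_word_def displacement_append)
  also have "\<dots> = - (displacement [c] + displacement u)"
    using Cons by (cases c) simp_all
  finally show ?case using displacement_append[of "[c]" u] by simp
qed (simp add: inv_word_def zero_prod_def)

lemma displacement_cancel_pair: "displacement (c # inv_letter c # w) = displacement w"
  by (cases c; cases "displacement w") simp_all

lemma pathP_append: "pathP p (u @ v) = pathP p u + pathP (p + displacement u) v"
proof (induction u arbitrary: p)
  case (Cons c u)
  then show ?case by (cases p; cases c) (simp_all add: add.assoc add_ac)
qed (simp flip: zero_prod_def)

lemma pathP_cancel_pair: "pathP p (c # inv_letter c # w) = pathP p w"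
  by (cases p; cases c) simp_all

lemma pathP_translate: "pathP (a + i, b + j) w = Poly_Mapping.single (a, b) 1 * pathP (i, j) w"
proof (induction w arbitrary: i j)
  case (Cons c w)
  show ?case
  proof (cases c)
    case Lx then show ?thesis using Cons[of "i + 1" j]
      by (simp add: mult_single distrib_left add.assoc)
  next
    case Lxi then show ?thesis using Cons[of "i - 1" j]
      by (simp add: mult_single distrib_left algebra_simps single_uminus)
  next
    case Ly then show ?thesis using Cons[of i "j + 1"] by (simp add: add.assoc)
  next
    case Lyi then show ?thesis using Cons[of i "j - 1"] by (simp add: algebra_simps)
  qed
qed simp

lemma pathP_eq_monomial_mult: "pathP p w = Poly_Mapping.single p 1 * pathP (0, 0) w"
  using pathP_translate[of "fst p" 0 "snd p" 0 w] by simp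

lemma equivclp_invariant:
  assumes "equivclp r a b" and "\<And>u v. r u v \<Longrightarrow> f u = f v"
  shows "f a = f b"
  using assms(1) by (induction rule: equivclp_induct) (auto dest: assms(2))

lemma free_eq_displacement: "free_eq u v \<Longrightarrow> displacement u = displacement v"
  unfolding free_eq_def
  by (erule equivclp_invariant)
     (auto simp: cancel_step_def displacement_append displacement_cancel_pair)

lemma free_eq_pathP: "free_eq u v \<Longrightarrow> pathP p u = pathP p v"
  unfolding free_eq_def
  by (erule equivclp_invariant)
     (auto simp: cancel_step_def pathP_append pathP_cancel_pair displacement_append
        displacement_cancel_pair)

lemma in_commutator_displacement: "in_commutator g \<Longrightarrow> displacement g = 0"
proof (induction rule: in_commutator.induct)
  case comm_nil then show ?case by (simp add: zero_prod_def)
next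
  case (comm_gen a b) then show ?case by (simp add: displacement_append displacement_inv_word)
next
  case (comm_inv u) then show ?case by (simp add: displacement_inv_word)
next
  case (comm_mult u v) then show ?case by (simp add: displacement_append)
next
  case (comm_eq u v) then show ?case using free_eq_displacement by metis
qed

lemma pathP_square_square:
  assumes "displacement (a @ a @ b @ b) = 0"
  defines "t \<equiv> Poly_Mapping.single (displacement a) 1"
  shows "pathP (0, 0) (a @ a @ b @ b) = (1 + t) * (pathP (0, 0) a + t * pathP (0, 0) b)"
proof -
  let ?e = "displacement a"
  have "?e + ?e + displacement b + displacement b = 0"
    using assms(1) by (simp add: displacement_append add.assoc)
  then have b_back: "displacement b = - ?e" by (simp add: prod_eq_iff)
  have "pathP (0, 0) (a @ a @ b @ b) = pathP (0, 0) a + pathP ?e a + pathP (?e + ?e) b + pathP ?e b"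
    by (simp add: pathP_append displacement_append b_back add.assoc zero_prod_def[symmetric])
  also have "\<dots> = pathP (0, 0) a + t * pathP (0, 0) a + t * t * pathP (0, 0) b + t * pathP (0, 0) b"
    using pathP_eq_monomial_mult[of ?e] pathP_eq_monomial_mult[of "?e + ?e"]
    by (simp add: t_def mult_single)
  finally show ?thesis by (simp add: algebra_simps)
qed

(* The coefficient of (x-1)^a (y-1)^b in the expansion of f at (1,1), obtained from
   x^i = (1 + (x-1))^i = \<Sum>a. (i gchoose a) (x-1)^a, which also holds for negative i.
   The values are integers (taylor_coeff_Ints); rat is used only because gchoose needs a field. *)
definition taylor_coeff :: "nat \<Rightarrow> nat \<Rightarrow> laurent \<Rightarrow> rat" where
  "taylor_coeff a b f = (\<Sum>m\<in>Poly_Mapping.keys f.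
     of_int (Poly_Mapping.lookup f m) * (of_int (fst m) gchoose a) * (of_int (snd m) gchoose b))"

lemma taylor_coeff_superset:
  assumes "finite M" "Poly_Mapping.keys f \<subseteq> M"
  shows "taylor_coeff a b f = (\<Sum>m\<in>M.
    of_int (Poly_Mapping.lookup f m) * (of_int (fst m) gchoose a) * (of_int (snd m) gchoose b))"
  unfolding taylor_coeff_def
  by (rule sum.mono_neutral_left) (use assms in \<open>auto simp: in_keys_iff\<close>)

lemma taylor_coeff_diff: "taylor_coeff a b (f - g) = taylor_coeff a b f - taylor_coeff a b g"
proof -
  let ?M = "Poly_Mapping.keys f \<union> Poly_Mapping.keys g"
  have "Poly_Mapping.keys (f - g) \<subseteq> ?M" by (auto simp: keys_diff)
  then show ?thesis
    by (simp add: taylor_coeff_superset[where M = ?M] lookup_minus algebra_simps sum_subtractf)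
qed

lemma taylor_coeff_zero [simp]: "taylor_coeff a b 0 = 0"
  by (simp add: taylor_coeff_def)

lemma taylor_coeff_add: "taylor_coeff a b (f + g) = taylor_coeff a b f + taylor_coeff a b g"
  using taylor_coeff_diff[of a b f "- g"] taylor_coeff_diff[of a b 0 g] by simp

lemma taylor_coeff_single:
  "taylor_coeff a b (Poly_Mapping.single m c) =
     of_int c * (of_int (fst m) gchoose a) * (of_int (snd m) gchoose b)"
  by (simp add: taylor_coeff_def)

lemma taylor_coeff_0_0: "taylor_coeff 0 0 f = of_int (eval_at_11 f)"
  by (simp add: taylor_coeff_def eval_at_11_def)

lemma gbinomial_of_int_Ints: "(of_int i :: 'a :: field_char_0) gchoose n \<in> \<int>"
  by (simp flip: of_int_gbinomial)

lemma taylor_coeff_Ints: "taylor_coeff a b f \<in> \<int>"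
  unfolding taylor_coeff_def by (intro Ints_sum Ints_mult Ints_of_int gbinomial_of_int_Ints)

lemma taylor_coeff_mult_single:
  "taylor_coeff a b (Poly_Mapping.single p 1 * Poly_Mapping.single q 1) =
     (\<Sum>i\<le>a. \<Sum>j\<le>b. taylor_coeff i j (Poly_Mapping.single p 1) *
        taylor_coeff (a - i) (b - j) (Poly_Mapping.single q 1))"
proof -
  let ?c = "\<lambda>z n. (of_int z :: rat) gchoose n"
  have "taylor_coeff a b (Poly_Mapping.single p 1 * Poly_Mapping.single q 1) =
      ?c (fst p + fst q) a * ?c (snd p + snd q) b"
    by (simp add: mult_single taylor_coeff_single)
  also have "\<dots> = (\<Sum>i\<le>a. ?c (fst p) i * ?c (fst q) (a - i)) *
      (\<Sum>j\<le>b. ?c (snd p) j * ?c (snd q) (b - j))"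
    using gbinomial_Vandermonde[of "of_int (fst p) :: rat" "of_int (fst q)" a]
      gbinomial_Vandermonde[of "of_int (snd p) :: rat" "of_int (snd q)" b]
    by (simp add: atLeast0AtMost)
  finally show ?thesis
    by (simp add: sum_product taylor_coeff_single mult_ac)
qed

lemma taylor_coeff_mult:
  "taylor_coeff a b (f * g) = (\<Sum>i\<le>a. \<Sum>j\<le>b. taylor_coeff i j f * taylor_coeff (a - i) (b - j) g)"
  using subset_UNIV
proof (induction f arbitrary: a b rule: frag_induction)
  case (one p)
  show ?case using subset_UNIV
  proof (induction g arbitrary: a b rule: frag_induction)
    case (one q) show ?case by (rule taylor_coeff_mult_single)
  next
    case (diff g1 g2) then show ?case
      by (simp add: right_diff_distrib taylor_coeff_diff sum_subtractf)
  qed simp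
next
  case (diff f1 f2) then show ?case
    by (simp add: left_diff_distrib taylor_coeff_diff sum_subtractf)
qed simp

lemma taylor_coeff_mult_basis:
  assumes "\<And>i j. taylor_coeff i j u = (if (i, j) = (i0, j0) then 1 else 0)"
  shows "taylor_coeff a b (u * f) = (if i0 \<le> a \<and> j0 \<le> b then taylor_coeff (a - i0) (b - j0) f else 0)"
proof -
  let ?c = "taylor_coeff (a - i0) (b - j0) f"
  have "taylor_coeff a b (u * f) = (\<Sum>i\<le>a. \<Sum>j\<le>b. if i = i0 then if j = j0 then ?c else 0 else 0)"
    unfolding taylor_coeff_mult assms by (intro sum.cong) auto
  also have "\<dots> = (if i0 \<le> a \<and> j0 \<le> b then ?c else 0)"
    by (cases "i0 \<le> a") (subst sum.swap; simp)+
  finally show ?thesis .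
qed

lemma gbinomial_1_left: "((1 :: 'a :: field_char_0) gchoose n) = (if n \<le> 1 then 1 else 0)"
  using binomial_gbinomial[of 1 n, where 'a = 'a] by (cases n) (auto simp: binomial_eq_0)

lemma taylor_coeff_x_minus_1: "taylor_coeff i j (lx - 1) = (if (i, j) = (1, 0) then 1 else 0)"
proof -
  have "lx - 1 = Poly_Mapping.single (1, 0) 1 - Poly_Mapping.single (0, 0) 1"
    by (simp add: lx_def zero_prod_def[symmetric])
  then show ?thesis
    by (auto simp: taylor_coeff_diff taylor_coeff_single gbinomial_0_left gbinomial_1_left)
qed

lemma taylor_coeff_y_minus_1: "taylor_coeff i j (ly - 1) = (if (i, j) = (0, 1) then 1 else 0)"
proof -
  have "ly - 1 = Poly_Mapping.single (0, 1) 1 - Poly_Mapping.single (0, 0) 1"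
    by (simp add: ly_def zero_prod_def[symmetric])
  then show ?thesis
    by (auto simp: taylor_coeff_diff taylor_coeff_single gbinomial_0_left gbinomial_1_left)
qed

lemma taylor_coeff_mult_power_x_minus_1:
  "taylor_coeff a b ((lx - 1) ^ k * f) = (if k \<le> a then taylor_coeff (a - k) b f else 0)"
proof (induction k arbitrary: a)
  case (Suc k)
  have "taylor_coeff a b ((lx - 1) ^ Suc k * f) = taylor_coeff a b ((lx - 1) * ((lx - 1) ^ k * f))"
    by (simp add: mult.assoc)
  then show ?case
    by (simp add: taylor_coeff_mult_basis[OF taylor_coeff_x_minus_1] Suc, arith)
qed simp

lemma taylor_coeff_mult_power_y_minus_1:
  "taylor_coeff a b ((ly - 1) ^ l * f) = (if l \<le> b then taylor_coeff a (b - l) f else 0)"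
proof (induction l arbitrary: b)
  case (Suc l)
  have "taylor_coeff a b ((ly - 1) ^ Suc l * f) = taylor_coeff a b ((ly - 1) * ((ly - 1) ^ l * f))"
    by (simp add: mult.assoc)
  then show ?case
    by (simp add: taylor_coeff_mult_basis[OF taylor_coeff_y_minus_1] Suc, arith)
qed simp

lemma taylor_coeff_mult_lower_vanish:
  assumes "\<And>i j. i \<le> a \<Longrightarrow> j \<le> b \<Longrightarrow> (i, j) \<noteq> (a, b) \<Longrightarrow> taylor_coeff i j g = 0"
  shows "taylor_coeff a b (f * g) = taylor_coeff 0 0 f * taylor_coeff a b g"
proof -
  let ?t = "\<lambda>p. taylor_coeff (fst p) (snd p) f * taylor_coeff (a - fst p) (b - snd p) g"
  have "taylor_coeff a b (f * g) = (\<Sum>p\<in>{..a} \<times> {..b}. ?t p)"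
    by (simp add: taylor_coeff_mult sum.cartesian_product case_prod_beta)
  also have "\<dots> = ?t (0, 0) + (\<Sum>p\<in>{..a} \<times> {..b} - {(0, 0)}. ?t p)"
    by (subst sum.remove[of _ "(0, 0)"]) auto
  also have "(\<Sum>p\<in>{..a} \<times> {..b} - {(0, 0)}. ?t p) = 0"
    by (intro sum.neutral) (auto intro!: assms)
  finally show ?thesis by simp
qed

(* Multiplication by f with nonzero constant term is invertible on power series,
   so it preserves the vanishing of all coefficients below (k,l). *)
lemma taylor_coeff_mult_lowest:
  assumes f: "taylor_coeff 0 0 f \<noteq> 0"
    and vanish: "\<And>i j. i < k \<or> j < l \<Longrightarrow> taylor_coeff i j (f * g) = 0"
  shows "taylor_coeff k l (f * g) = taylor_coeff 0 0 f * taylor_coeff k l g"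
proof -
  have g_vanish: "taylor_coeff i j g = 0" if "i < k \<or> j < l" for i j
    using that
  proof (induction "i + j" arbitrary: i j rule: less_induct)
    case less
    have "taylor_coeff 0 0 f * taylor_coeff i j g = 0"
      using vanish[OF less.prems] taylor_coeff_mult_lower_vanish[of i j g f]
        less.hyps less.prems by force
    then show ?case using f by simp
  qed
  show ?thesis
    by (rule taylor_coeff_mult_lower_vanish) (auto intro!: g_vanish)
qed

theorem proposition5p1:
  fixes g a b :: word and k l :: nat and h :: laurent
  assumes "in_commutator g"
    and "P_alpha g = (lx - 1) ^ k * (ly - 1) ^ l * h"
    and "free_eq g (a @ a @ b @ b)"
  shows "even (eval_at_11 h)"
proof -
  define t :: laurent where "t = Poly_Mapping.single (displacement a) 1"
  define S where "S = pathP (0, 0) a + t * pathP (0, 0) b"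
  have "displacement (a @ a @ b @ b) = 0"
    using assms(1,3) by (metis free_eq_displacement in_commutator_displacement)
  then have P_factor: "P_alpha g = (1 + t) * S"
    using free_eq_pathP[OF assms(3)] pathP_square_square
    unfolding P_alpha_def S_def t_def by metis
  have P_coeff: "taylor_coeff i j (P_alpha g) =
      (if k \<le> i \<and> l \<le> j then taylor_coeff (i - k) (j - l) h else 0)" for i j
    unfolding assms(2) mult.assoc taylor_coeff_mult_power_x_minus_1 taylor_coeff_mult_power_y_minus_1
    by simp
  have "taylor_coeff 0 0 (1 + t) = 2"
    by (simp add: t_def taylor_coeff_add taylor_coeff_single flip: single_one)
  then have "taylor_coeff k l (P_alpha g) = 2 * taylor_coeff k l S"
    unfolding P_factor by (subst taylor_coeff_mult_lowest) (use P_coeff P_factor in auto)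
  then have "of_int (eval_at_11 h) = 2 * taylor_coeff k l S"
    by (simp add: P_coeff taylor_coeff_0_0)
  moreover obtain z where "taylor_coeff k l S = of_int z"
    using taylor_coeff_Ints Ints_cases by metis
  ultimately have "eval_at_11 h = 2 * z"
    by (metis of_int_eq_iff of_int_mult of_int_numeral)
  then show ?thesis by simp
qed

end
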